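(* There exists an open interval $I_2\subset\mathbb{R}$ containing $0$ such that the following hold. (1) There exist functions $\eta_2:I_2\to\mathbb{R}^3$ with $|\eta_2(t)|\ge1$ for all $t\in I_2$, and, for each $t\in I_2$, $T_t:I_2\to\mathbb{R}$, such that for all $x,t\in I_2$, $$(T_t(x))^2=(x+x^3,\,x^2,\,1)\cdot\eta_2(t).$$ (2) For each $x\in I_2$, the function $F_x:I_2\to\mathbb{R}$, $F_x(t):=(T_t(x))^2$, satisfies: (a) $F_x(x)=0$; (b) for $t\in I_2$, $\frac{\partial F_x}{\partial t}(t)=0$ if and only if $t=x$; (c) $\frac{\partial^2F_0}{\partial t^2}(0)=2$, and there is $\epsilon>0$ such that $\epsilon\le\frac{\partial^2F_x}{\partial t^2}(t)\le\epsilon^{-1}$ for all $x,t\in I_2$. *)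

theory Defs
  imports "HOL-Analysis.Analysis"
begin

end

theory Submission
  imports Defs
begin

text \<open>Take \<open>T\<^sub>t(x) = (t - x) \<surd>(1 - t\<^sup>2 - 2xt)\<close>. Where the radicand is nonnegative,
  \<open>T\<^sub>t(x)\<^sup>2 = (t - x)\<^sup>2 (1 - t\<^sup>2 - 2xt)\<close>, a polynomial which expands as
  \<open>(x + x\<^sup>3, x\<^sup>2, 1) \<bullet> (-2t, 1 + 3t\<^sup>2, t\<^sup>2 - t\<^sup>4)\<close>; the middle entry of \<open>\<eta>(t)\<close> is at
  least 1. Its \<open>t\<close>-derivative \<open>2(t - x)(1 - 2t\<^sup>2 - 2xt + x\<^sup>2)\<close> vanishes near the origin
  only at \<open>t = x\<close>, and its second derivative \<open>2 - 12t\<^sup>2 + 6x\<^sup>2\<close> stays close to 2 there.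
  The interval \<open>(-1/10, 1/10)\<close> is small enough for all of this.\<close>

definition T :: "real \<Rightarrow> real \<Rightarrow> real" where
  "T t x = (t - x) * sqrt (1 - t^2 - 2*x*t)"

definition F :: "real \<Rightarrow> real \<Rightarrow> real" where
  "F x t = (t - x)^2 * (1 - t^2 - 2*x*t)"

definition F' :: "real \<Rightarrow> real \<Rightarrow> real" where
  "F' x t = 2*(t - x) * (1 - 2*t^2 - 2*x*t + x^2)"

definition F'' :: "real \<Rightarrow> real \<Rightarrow> real" where
  "F'' x t = 2 - 12*t^2 + 6*x^2"

definition \<eta> :: "real \<Rightarrow> real^3" where
  "\<eta> t = vector [-2*t, 1 + 3*t^2, t^2 - t^4]"

lemma F_has_real_derivative: "(F x has_real_derivative F' x t) (at t)"
  unfolding F_def [abs_def] F'_def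
  by (rule derivative_eq_intros refl)+ (simp add: algebra_simps power2_eq_square)

lemma F'_has_real_derivative: "(F' x has_real_derivative F'' x t) (at t)"
  unfolding F'_def [abs_def] F''_def
  by (rule derivative_eq_intros refl)+ (simp add: algebra_simps power2_eq_square)

lemma F_eq_inner_\<eta>: "F x t = vector [x + x^3, x^2, 1] \<bullet> \<eta> t"
  by (simp add: F_def \<eta>_def inner_vec_def sum_3 algebra_simps
      power2_eq_square power3_eq_cube power4_eq_xxxx)

lemma T_diagonal: "T x x = 0"
  by (simp add: T_def)

lemma T_squared: "0 \<le> 1 - t^2 - 2*x*t \<Longrightarrow> (T t x)^2 = F x t"
  by (simp add: T_def F_def power_mult_distrib)

lemma derivs_eq_on_open:
  fixes f g :: "real \<Rightarrow> real"
  assumes "open U" "t \<in> U" and eq: "\<And>s. s \<in> U \<Longrightarrow> f s = g s"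
    and g': "\<And>s. (g has_real_derivative g' s) (at s)"
    and g'': "\<And>s. (g' has_real_derivative g'' s) (at s)"
  shows "(f has_real_derivative g' t) (at t)"
    and "(deriv f has_real_derivative g'' t) (at t)"
    and "deriv f t = g' t"
    and "deriv (deriv f) t = g'' t"
proof -
  have f': "(f has_real_derivative g' s) (at s)" if "s \<in> U" for s
    using has_field_derivative_transform_within_open[OF g' \<open>open U\<close> that] eq by simp
  have deriv_f: "deriv f s = g' s" if "s \<in> U" for s
    using f'[OF that] by (rule DERIV_imp_deriv)
  show "(f has_real_derivative g' t) (at t)" "deriv f t = g' t"
    using f' deriv_f \<open>t \<in> U\<close> by auto
  show f'': "(deriv f has_real_derivative g'' t) (at t)"
    using has_field_derivative_transform_within_open[OF g'' \<open>open U\<close> \<open>t \<in> U\<close>] deriv_f by simp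
  show "deriv (deriv f) t = g'' t"
    using f'' by (rule DERIV_imp_deriv)
qed

lemma small_square_bounds:
  fixes x t :: real
  assumes "\<bar>x\<bar> < 1/10" "\<bar>t\<bar> < 1/10"
  shows "x^2 < 1/100" "t^2 < 1/100" "\<bar>x * t\<bar> < 1/100"
  using abs_mult_less[OF assms(1) assms(1)] abs_mult_less[OF assms(2) assms(2)]
    abs_mult_less[OF assms]
  by (simp_all add: power2_eq_square abs_mult)

lemma radicand_nonneg:
  fixes x t :: real
  shows "\<bar>x\<bar> < 1/10 \<Longrightarrow> \<bar>t\<bar> < 1/10 \<Longrightarrow> 0 \<le> 1 - t^2 - 2*x*t"
  using small_square_bounds[of x t] abs_ge_minus_self[of "x*t"] by (simp add: mult.assoc)

lemma F'_eq_0_iff: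
  assumes "\<bar>x\<bar> < 1/10" "\<bar>t\<bar> < 1/10"
  shows "F' x t = 0 \<longleftrightarrow> t = x"
proof -
  have "0 < 1 - 2*t^2 - 2*(x*t) + x^2"
    using small_square_bounds[OF assms] zero_le_power2[of x] abs_ge_self[of "x*t"] by linarith
  then show ?thesis by (simp add: F'_def mult.assoc)
qed

lemma F''_bounds:
  assumes "\<bar>x\<bar> < 1/10" "\<bar>t\<bar> < 1/10"
  shows "1/3 \<le> F'' x t" "F'' x t \<le> 3"
  using small_square_bounds[OF assms] zero_le_power2[of x] zero_le_power2[of t]
  unfolding F''_def by linarith+

lemma norm_\<eta>_ge_1: "1 \<le> norm (\<eta> t)"
proof -
  have "1 \<le> \<bar>\<eta> t $ 2\<bar>" by (simp add: \<eta>_def)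
  then show ?thesis using component_le_norm_cart[of "\<eta> t" 2] by linarith
qed

theorem mainTheorem8:
  shows "\<exists>I :: real set. is_interval I \<and> open I \<and> 0 \<in> I \<and>
    (\<exists>(\<eta> :: real \<Rightarrow> real^3) (T :: real \<Rightarrow> real \<Rightarrow> real).
       (\<forall>t\<in>I. norm (\<eta> t) \<ge> 1) \<and>
       (\<forall>x\<in>I. \<forall>t\<in>I. (T t x)^2 = vector [x + x^3, x^2, 1] \<bullet> \<eta> t) \<and>
       (\<forall>x\<in>I. (T x x)^2 = 0 \<and>
          (\<forall>t\<in>I. (\<lambda>s. (T s x)^2) differentiable (at t) \<and>
                  deriv (\<lambda>s. (T s x)^2) differentiable (at t) \<and>
                  (deriv (\<lambda>s. (T s x)^2) t = 0 \<longleftrightarrow> t = x))) \<and>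
       deriv (deriv (\<lambda>s. (T s 0)^2)) 0 = 2 \<and>
       (\<exists>\<epsilon>>0. \<forall>x\<in>I. \<forall>t\<in>I.
          \<epsilon> \<le> deriv (deriv (\<lambda>s. (T s x)^2)) t \<and>
          deriv (deriv (\<lambda>s. (T s x)^2)) t \<le> 1 / \<epsilon>))"
proof -
  define I :: "real set" where "I = {-1/10 <..< 1/10}"
  have I_iff: "s \<in> I \<longleftrightarrow> \<bar>s\<bar> < 1/10" for s by (auto simp: I_def abs_less_iff)
  have I: "open I" "is_interval I" "0 \<in> I" by (auto simp: I_def is_interval_def)
  have T_sq: "(T t x)^2 = F x t" if "x \<in> I" "t \<in> I" for x t
    using that by (intro T_squared radicand_nonneg) (simp_all add: I_iff)
  have derivs: "(\<lambda>s. (T s x)^2) differentiable (at t)"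
      "deriv (\<lambda>s. (T s x)^2) differentiable (at t)"
      "deriv (\<lambda>s. (T s x)^2) t = F' x t"
      "deriv (deriv (\<lambda>s. (T s x)^2)) t = F'' x t" if "x \<in> I" "t \<in> I" for x t
    using derivs_eq_on_open[OF \<open>open I\<close> \<open>t \<in> I\<close> T_sq[OF \<open>x \<in> I\<close>]
        F_has_real_derivative F'_has_real_derivative]
    by (auto simp: real_differentiable_def)
  have "deriv (deriv (\<lambda>s. (T s 0)^2)) 0 = 2"
    using derivs(4)[OF \<open>0 \<in> I\<close> \<open>0 \<in> I\<close>] by (simp add: F''_def)
  then show ?thesis
    using I derivs T_sq norm_\<eta>_ge_1 F'_eq_0_iff F''_bounds
    by (intro exI[of _ I] exI[of _ \<eta>] exI[of _ T] conjI exI[of _ "1/3::real"])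
      (auto simp: I_iff F_eq_inner_\<eta> T_diagonal)
qed

end
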